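(* Let $p,q\ge 0$ be integers, $n=p+q\ge 1$, and let $\mathcal{C}\ell(p,q)$ be the complex Clifford algebra with identity $e$ and generators $e^1,\dots,e^n$ satisfying $e^ae^b+e^be^a=2\eta^{ab}e$. For $U\in\mathcal{C}\ell(p,q)$ let $F(U)=e^aUe_a$ (summation over $a=1,\dots,n$, with $e_a=\eta_{ab}e^b$), $F^0(U)=U$, $F^{l+1}(U)=F(F^l(U))$, and let $\lambda_k=(-1)^k(n-2k)$, $k=0,\dots,n$. (i) If $n$ is even, then the $(n+1)\times(n+1)$ matrix $A=(a_{kl})_{k,l=0}^{n}$ with $a_{kl}=(\lambda_l)^k$ is invertible, and, writing $B=(b_{kl})_{k,l=0}^n=A^{-1}$, for every $U\in\mathcal{C}\ell(p,q)$ and every $k=0,\dots,n$, $$\pi_k(U)=\sum_{l=0}^n b_{kl}F^l(U).$$ (ii) If $n$ is odd, then the $\frac{n+1}{2}\times\frac{n+1}{2}$ matrix $D=(d_{kl})_{k,l=0}^{(n-1)/2}$ with $d_{kl}=(\lambda_l)^k$ is invertible, and, writing $G=(g_{kl})=D^{-1}$, for every $U\in\mathcal{C}\ell(p,q)$ and every $k=0,\dots,\frac{n-1}{2}$, $$\pi_k(U)+\pi_{n-k}(U)=\sum_{l=0}^{(n-1)/2} g_{kl}F^l(U).$$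
   Context: $\eta=(\eta^{ab})=(\eta_{ab})=\mathrm{diag}(1,\dots,1,-1,\dots,-1)$ with $p$ entries $1$ and $q$ entries $-1$. $\mathcal{C}\ell(p,q)$ is the associative unital complex algebra of dimension $2^n$ with basis $e$ and $e^{a_1\dots a_k}=e^{a_1}\cdots e^{a_k}$ for $1\le a_1<\dots<a_k\le n$, $k=1,\dots,n$. For $k=0,\dots,n$, $\mathcal{C}\ell_k(p,q)$ is the span of the basis elements $e^{a_1\dots a_k}$ with exactly $k$ indices ($\mathcal{C}\ell_0=\mathbb{C}e$), and $\pi_k:\mathcal{C}\ell(p,q)\to\mathcal{C}\ell_k(p,q)$ is the projection with respect to the direct sum decomposition $\mathcal{C}\ell(p,q)=\bigoplus_{k=0}^n\mathcal{C}\ell_k(p,q)$. *)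

theory Defs
  imports Complex_Main
begin

definition eta :: "nat \<Rightarrow> nat \<Rightarrow> nat \<Rightarrow> complex" where
  "eta p a b = (if a = b then (if a \<le> p then 1 else -1) else 0)"

definition blade :: "(nat \<Rightarrow> 'a::ring_1) \<Rightarrow> nat set \<Rightarrow> 'a" where
  "blade gen A = prod_list (map gen (sorted_list_of_set A))"

text \<open>The associative unital complex algebra Cl(p,q): a ring 'a with a central
  embedding of the complex scalars, generators e^1..e^n with the Clifford relations,
  such that the blades e^A (A \<subseteq> {1..n}, with e^{} = e) form a basis.\<close>
definition is_clifford :: "nat \<Rightarrow> nat \<Rightarrow> (complex \<Rightarrow> 'a::ring_1) \<Rightarrow> (nat \<Rightarrow> 'a) \<Rightarrow> bool" where
  "is_clifford p q of_c gen \<longleftrightarrow>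
     of_c 1 = 1 \<and>
     (\<forall>x y. of_c (x + y) = of_c x + of_c y) \<and>
     (\<forall>x y. of_c (x * y) = of_c x * of_c y) \<and>
     (\<forall>x U. of_c x * U = U * of_c x) \<and>
     (\<forall>a\<in>{1..p+q}. \<forall>b\<in>{1..p+q}. gen a * gen b + gen b * gen a = of_c (2 * eta p a b)) \<and>
     (\<forall>U. \<exists>!c. (\<forall>A. \<not> A \<subseteq> {1..p+q} \<longrightarrow> c A = 0) \<and>
             U = (\<Sum>A\<in>Pow {1..p+q}. of_c (c A) * blade gen A))"

definition cl_coeff :: "nat \<Rightarrow> (complex \<Rightarrow> 'a::ring_1) \<Rightarrow> (nat \<Rightarrow> 'a) \<Rightarrow> 'a \<Rightarrow> nat set \<Rightarrow> complex" where
  "cl_coeff n of_c gen U = (THE c. (\<forall>A. \<not> A \<subseteq> {1..n} \<longrightarrow> c A = 0) \<and>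
             U = (\<Sum>A\<in>Pow {1..n}. of_c (c A) * blade gen A))"

definition grade_proj :: "nat \<Rightarrow> (complex \<Rightarrow> 'a::ring_1) \<Rightarrow> (nat \<Rightarrow> 'a) \<Rightarrow> nat \<Rightarrow> 'a \<Rightarrow> 'a" where
  "grade_proj n of_c gen k U =
     (\<Sum>A\<in>{A. A \<subseteq> {1..n} \<and> card A = k}. of_c (cl_coeff n of_c gen U A) * blade gen A)"

definition cliffF :: "nat \<Rightarrow> nat \<Rightarrow> (complex \<Rightarrow> 'a::ring_1) \<Rightarrow> (nat \<Rightarrow> 'a) \<Rightarrow> 'a \<Rightarrow> 'a" where
  "cliffF p q of_c gen U = (\<Sum>a\<in>{1..p+q}. gen a * U * (\<Sum>b\<in>{1..p+q}. of_c (eta p a b) * gen b))"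

definition lam :: "nat \<Rightarrow> nat \<Rightarrow> complex" where
  "lam n k = (-1) ^ k * of_int (int n - 2 * int k)"

definition mat_inverse_on :: "nat \<Rightarrow> (nat \<Rightarrow> nat \<Rightarrow> complex) \<Rightarrow> (nat \<Rightarrow> nat \<Rightarrow> complex) \<Rightarrow> bool" where
  "mat_inverse_on m M B \<longleftrightarrow>
     (\<forall>i<m. \<forall>j<m. (\<Sum>l<m. M i l * B l j) = (if i = j then 1 else 0)) \<and>
     (\<forall>i<m. \<forall>j<m. (\<Sum>l<m. B i l * M l j) = (if i = j then 1 else 0))"

end

theory Submission
  imports Defs "HOL-Computational_Algebra.Polynomial"
begin

text \<open>
  F acts on a blade e^A with |A| = k as the scalar \<lambda>_k: moving e^a across e^A costs the
  sign (-1)^k if a \<notin> A and (-1)^(k-1) if a \<in> A, after which e^a e_a = e, and summing over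
  a gives (n - k)(-1)^k + k(-1)^(k-1) = \<lambda>_k. Hence F^l(U) = \<Sum>_k \<lambda>_k^l \<pi>_k(U), a Vandermonde
  system for the projections. Since \<lambda>_j = \<lambda>_k only for j = k or for j + k = n with n odd,
  for even n the nodes \<lambda>_0, ..., \<lambda>_n are distinct and the inverse Vandermonde matrix
  recovers every \<pi>_k(U); for odd n the projections \<pi>_k and \<pi>_(n-k) share the node \<lambda>_k, and
  the distinct nodes \<lambda>_0, ..., \<lambda>_((n-1)/2) recover the sums \<pi>_k(U) + \<pi>_(n-k)(U).
\<close>

definition lagrange_basis :: "(nat \<Rightarrow> 'a::field) \<Rightarrow> nat \<Rightarrow> nat \<Rightarrow> 'a poly" where
  "lagrange_basis x m k =
     smult (inverse (\<Prod>j\<in>{..<m} - {k}. x k - x j)) (\<Prod>j\<in>{..<m} - {k}. [:- x j, 1:])"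

lemma degree_lagrange_basis:
  assumes "k < m"
  shows "degree (lagrange_basis x m k) < m"
proof -
  have "degree (\<Prod>j\<in>{..<m} - {k}. [:- x j, 1:]) \<le> sum (degree \<circ> (\<lambda>j. [:- x j, 1:])) ({..<m} - {k})"
    by (rule degree_prod_sum_le) auto
  also have "\<dots> < m" using assms by simp
  finally show ?thesis
    unfolding lagrange_basis_def using degree_smult_le le_less_trans by blast
qed

lemma poly_lagrange_basis:
  assumes "inj_on x {..<m}" "k < m" "i < m"
  shows "poly (lagrange_basis x m k) (x i) = (if k = i then 1 else 0)"
proof (cases "k = i")
  case True
  have "(\<Prod>j\<in>{..<m} - {k}. x k - x j) \<noteq> 0"
    using assms by (auto simp: inj_on_def)
  with True show ?thesis by (simp add: lagrange_basis_def poly_prod)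
next
  case False
  then have "(\<Prod>j\<in>{..<m} - {k}. poly [:- x j, 1:] (x i)) = 0"
    using assms(3) by (intro prod_zero) auto
  with False show ?thesis by (simp add: lagrange_basis_def poly_prod)
qed

lemma poly_eq_sum_coeff_lessThan:
  fixes P :: "'a::{comm_semiring_0,semiring_1} poly"
  assumes "degree P < m"
  shows "poly P y = (\<Sum>l<m. coeff P l * y ^ l)"
proof -
  have "poly P y = (\<Sum>l\<le>degree P. coeff P l * y ^ l)" by (rule poly_altdef)
  also have "\<dots> = (\<Sum>l<m. coeff P l * y ^ l)"
    by (rule sum.mono_neutral_left) (use assms in \<open>auto simp: coeff_eq_0 not_le\<close>)
  finally show ?thesis .
qed

lemma sum_lagrange_basis_power:
  assumes inj: "inj_on x {..<m}" and "i < m"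
  shows "(\<Sum>l<m. smult (x l ^ i) (lagrange_basis x m l)) = monom 1 i"
proof (rule poly_eqI_degree[where A = "x ` {..<m}"])
  show "poly (\<Sum>l<m. smult (x l ^ i) (lagrange_basis x m l)) y = poly (monom 1 i) y"
    if "y \<in> x ` {..<m}" for y
  proof -
    from that obtain j where j: "j < m" "y = x j" by auto
    then have "(\<Sum>l<m. x l ^ i * poly (lagrange_basis x m l) y) = (\<Sum>l<m. if l = j then x l ^ i else 0)"
      using poly_lagrange_basis[OF inj] by (intro sum.cong) auto
    with j show ?thesis by (simp add: poly_sum poly_monom)
  qed
  have "card (x ` {..<m}) = m" using inj by (simp add: card_image)
  then show "degree (\<Sum>l<m. smult (x l ^ i) (lagrange_basis x m l)) < card (x ` {..<m})"
    and "degree (monom 1 i) < card (x ` {..<m})"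
    using assms(2) degree_lagrange_basis degree_smult_le le_less_trans
    by (auto intro!: degree_sum_less intro: le_less_trans[OF degree_monom_le])
qed

lemma vandermonde_mat_inverse:
  fixes x :: "nat \<Rightarrow> complex"
  assumes inj: "inj_on x {..<m}"
  shows "mat_inverse_on m (\<lambda>k l. x l ^ k) (\<lambda>k l. coeff (lagrange_basis x m k) l)"
  unfolding mat_inverse_on_def
proof (intro conjI allI impI)
  fix i j assume "i < m" "j < m"
  show "(\<Sum>l<m. x l ^ i * coeff (lagrange_basis x m l) j) = (if i = j then 1 else 0)"
    using arg_cong[OF sum_lagrange_basis_power[OF inj \<open>i < m\<close>], of "\<lambda>P. coeff P j"]
    by (simp add: coeff_sum)
  show "(\<Sum>l<m. coeff (lagrange_basis x m i) l * x j ^ l) = (if i = j then 1 else 0)"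
    using poly_eq_sum_coeff_lessThan[OF degree_lagrange_basis[of i m x], of "x j"] \<open>i < m\<close>
      poly_lagrange_basis[OF inj \<open>i < m\<close> \<open>j < m\<close>] by auto
qed

lemma lam_eq_of_int: "lam n j = of_int ((-1) ^ j * (int n - 2 * int j))"
  by (simp add: lam_def)

lemma lam_eq_lam_iff:
  "lam n j = lam n j' \<longleftrightarrow> j = j' \<or> (odd (j + j') \<and> j + j' = n)"
  unfolding lam_eq_of_int of_int_eq_iff
  by (cases "even j"; cases "even j'") (auto simp: minus_one_power_iff)

lemma inj_on_lam_even: "even n \<Longrightarrow> inj_on (lam n) {..n}"
  by (auto simp: inj_on_def lam_eq_lam_iff)

lemma inj_on_lam_odd: "inj_on (lam n) {..<(n + 1) div 2}"
  by (auto simp: inj_on_def lam_eq_lam_iff)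

lemma lam_diff_odd: "odd n \<Longrightarrow> j \<le> n \<Longrightarrow> lam n (n - j) = lam n j"
  by (simp add: lam_eq_lam_iff)

lemma sum_atMost_odd_fold:
  fixes f :: "nat \<Rightarrow> 'b::comm_monoid_add"
  shows "(\<Sum>j\<le>2 * m + 1. f j) = (\<Sum>j\<le>m. f j + f (2 * m + 1 - j))"
proof -
  have "{..2 * m + 1} = {..m} \<union> {Suc m..2 * m + 1}" by auto
  then have "(\<Sum>j\<le>2 * m + 1. f j) = (\<Sum>j\<le>m. f j) + (\<Sum>j\<in>{Suc m..2 * m + 1}. f j)"
    by (simp add: sum.union_disjoint)
  also have "(\<Sum>j\<in>{Suc m..2 * m + 1}. f j) = (\<Sum>j\<le>m. f (2 * m + 1 - j))"
    by (rule sum.reindex_bij_witness[of _ "\<lambda>j. 2 * m + 1 - j" "\<lambda>j. 2 * m + 1 - j"]) auto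
  finally show ?thesis by (simp add: sum.distrib)
qed

lemma sum_minus_one_power_card_Diff:
  assumes "A \<subseteq> {1..n}"
  shows "(\<Sum>a\<in>{1..n}. (-1::complex) ^ card (A - {a})) = lam n (card A)"
proof -
  define k where "k = card A"
  have fin: "finite A" and kn: "k \<le> n"
    using assms finite_subset card_mono[OF _ assms] by (auto simp: k_def)
  have "(\<Sum>a\<in>{1..n}. (-1::complex) ^ card (A - {a}))
      = (\<Sum>a\<in>A. (-1) ^ card (A - {a})) + (\<Sum>a\<in>{1..n} - A. (-1) ^ card (A - {a}))"
    using assms by (simp add: sum.subset_diff)
  also have "\<dots> = (\<Sum>a\<in>A. (-1) ^ (k - 1)) + (\<Sum>a\<in>{1..n} - A. (-1) ^ k)"
    using fin by (intro arg_cong2[where f = "(+)"] sum.cong) (auto simp: k_def)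
  also have "\<dots> = of_nat k * (-1) ^ (k - 1) + of_nat (n - k) * (-1) ^ k"
    using assms fin by (simp add: card_Diff_subset k_def)
  also have "\<dots> = lam n k"
    using kn by (cases k) (simp_all add: lam_def algebra_simps)
  finally show ?thesis by (simp add: k_def)
qed

locale complex_scalars =
  fixes of_c :: "complex \<Rightarrow> 'a::ring_1"
  assumes of_c_1: "of_c 1 = 1"
    and of_c_add: "of_c (x + y) = of_c x + of_c y"
    and of_c_mult: "of_c (x * y) = of_c x * of_c y"
    and of_c_commute: "of_c x * U = U * of_c x"
begin

lemma of_c_0: "of_c 0 = 0"
  using of_c_add[of 0 0] by simp

lemma of_c_minus: "of_c (- x) = - of_c x"
  using of_c_add[of x "- x"] by (simp add: of_c_0 minus_unique)

lemma of_c_sum: "of_c (\<Sum>i\<in>I. f i) = (\<Sum>i\<in>I. of_c (f i))"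
  by (induction I rule: infinite_finite_induct) (simp_all add: of_c_0 of_c_add)

lemma of_c_half_double: "of_c (1 / 2) * (Y + Y) = Y"
proof -
  have "of_c (1 / 2) * (Y + Y) = of_c (1 / 2 + 1 / 2) * Y"
    by (simp only: of_c_add distrib_left distrib_right)
  then show ?thesis by (simp add: of_c_1)
qed

lemma inverse_vandermonde_solves:
  assumes "mat_inverse_on m (\<lambda>k l. x l ^ k) B" "k < m"
  shows "(\<Sum>l<m. of_c (B k l) * (\<Sum>j<m. of_c (x j ^ l) * P j)) = P k"
proof -
  have "(\<Sum>l<m. of_c (B k l) * (\<Sum>j<m. of_c (x j ^ l) * P j))
      = (\<Sum>j<m. \<Sum>l<m. of_c (B k l * x j ^ l) * P j)"
    by (subst sum.swap) (simp add: sum_distrib_left of_c_mult mult.assoc)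
  also have "\<dots> = (\<Sum>j<m. of_c (if k = j then 1 else 0) * P j)"
  proof (intro sum.cong refl)
    fix j assume "j \<in> {..<m}"
    then have "(\<Sum>l<m. B k l * x j ^ l) = (if k = j then 1 else 0)"
      using assms unfolding mat_inverse_on_def by simp
    then show "(\<Sum>l<m. of_c (B k l * x j ^ l) * P j) = of_c (if k = j then 1 else 0) * P j"
      by (simp only: sum_distrib_right[symmetric] of_c_sum[symmetric])
  qed
  also have "\<dots> = (\<Sum>j<m. if k = j then P j else 0)"
    by (intro sum.cong) (simp_all add: of_c_0 of_c_1)
  also have "\<dots> = P k"
    using assms(2) by simp
  finally show ?thesis .
qed

end

locale clifford_algebra =
  fixes p q :: nat and of_c :: "complex \<Rightarrow> 'a::ring_1" and gen :: "nat \<Rightarrow> 'a"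
  assumes is_clifford: "is_clifford p q of_c gen"

sublocale clifford_algebra \<subseteq> complex_scalars of_c
  using is_clifford unfolding is_clifford_def complex_scalars_def by (elim conjE) (intro conjI; assumption)

context clifford_algebra
begin

lemma gen_anticommutator:
  assumes "a \<in> {1..p+q}" "b \<in> {1..p+q}"
  shows "gen a * gen b + gen b * gen a = of_c (2 * eta p a b)"
proof -
  have "\<forall>a\<in>{1..p+q}. \<forall>b\<in>{1..p+q}. gen a * gen b + gen b * gen a = of_c (2 * eta p a b)"
    using is_clifford unfolding is_clifford_def by (elim conjE) assumption
  with assms show ?thesis by blast
qed

lemma gen_square:
  assumes "a \<in> {1..p+q}"
  shows "gen a * gen a = of_c (eta p a a)"
proof -
  have "gen a * gen a = of_c (1 / 2) * (gen a * gen a + gen a * gen a)"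
    by (rule of_c_half_double[symmetric])
  also have "\<dots> = of_c (eta p a a)"
    by (simp only: gen_anticommutator[OF assms assms] of_c_mult[symmetric]) simp
  finally show ?thesis .
qed

lemma gen_anticommute:
  assumes "a \<in> {1..p+q}" "b \<in> {1..p+q}" "a \<noteq> b"
  shows "gen a * gen b = - (gen b * gen a)"
proof -
  have "gen a * gen b + gen b * gen a = 0"
    using gen_anticommutator[OF assms(1,2)] assms(3) by (simp add: eta_def of_c_0)
  then show ?thesis by (simp add: eq_neg_iff_add_eq_0)
qed

lemma blade_expansion:
  "U = (\<Sum>A\<in>Pow {1..p+q}. of_c (cl_coeff (p+q) of_c gen U A) * blade gen A)"
proof -
  have "\<exists>!c. (\<forall>A. \<not> A \<subseteq> {1..p+q} \<longrightarrow> c A = 0) \<and>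
             U = (\<Sum>A\<in>Pow {1..p+q}. of_c (c A) * blade gen A)"
    using is_clifford unfolding is_clifford_def by (elim conjE allE) assumption
  from theI'[OF this] show ?thesis unfolding cl_coeff_def by blast
qed

lemma gen_mult_prod_list:
  assumes "set xs \<subseteq> {1..p+q}" "a \<in> {1..p+q}"
  shows "gen a * prod_list (map gen xs) =
     of_c ((-1) ^ length (filter (\<lambda>x. x \<noteq> a) xs)) * (prod_list (map gen xs) * gen a)"
  using assms(1)
proof (induction xs)
  case Nil
  then show ?case by (simp add: of_c_1)
next
  case (Cons x xs)
  define s where "s = (-1::complex) ^ length (filter (\<lambda>x. x \<noteq> a) xs)"
  define P where "P = prod_list (map gen xs)"
  have IH: "gen a * P = of_c s * (P * gen a)" using Cons by (simp add: s_def P_def)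
  show ?case
  proof (cases "x = a")
    case True
    have "gen a * (gen x * P) = (gen a * of_c s) * (P * gen a)"
      using True IH by (simp add: mult.assoc)
    also have "\<dots> = of_c s * (gen x * P * gen a)"
      using True by (simp only: of_c_commute[of s "gen a", symmetric] mult.assoc)
    finally show ?thesis using True by (simp add: s_def P_def)
  next
    case False
    have x: "x \<in> {1..p+q}" using Cons by auto
    have "gen a * (gen x * P) = - (gen x * (gen a * P))"
      using gen_anticommute[OF assms(2) x] False by (simp add: mult.assoc[symmetric])
    also have "\<dots> = - (of_c s * gen x * (P * gen a))"
      using IH by (simp add: of_c_commute[of s "gen x"] mult.assoc)
    also have "\<dots> = of_c (- s) * (gen x * P * gen a)"
      by (simp add: of_c_minus mult.assoc)
    finally show ?thesis using False by (simp add: s_def P_def)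
  qed
qed

lemma gen_mult_blade:
  assumes "A \<subseteq> {1..p+q}" "a \<in> {1..p+q}"
  shows "gen a * blade gen A = of_c ((-1) ^ card (A - {a})) * (blade gen A * gen a)"
proof -
  have fin: "finite A" using assms(1) finite_subset by blast
  have "length (filter (\<lambda>x. x \<noteq> a) (sorted_list_of_set A)) = card (A - {a})"
    using fin by (subst distinct_length_filter) (auto intro: arg_cong[where f = card])
  then show ?thesis
    using gen_mult_prod_list[of "sorted_list_of_set A" a] assms fin by (simp add: blade_def)
qed

lemma sum_eta_gen:
  assumes "a \<in> {1..p+q}"
  shows "(\<Sum>b\<in>{1..p+q}. of_c (eta p a b) * gen b) = of_c (eta p a a) * gen a"
proof -
  have "(\<Sum>b\<in>{1..p+q}. of_c (eta p a b) * gen b)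
      = (\<Sum>b\<in>{1..p+q}. if b = a then of_c (eta p a a) * gen a else 0)"
    by (intro sum.cong) (auto simp: eta_def of_c_0)
  with assms show ?thesis by simp
qed

lemma cliffF_blade:
  assumes A: "A \<subseteq> {1..p+q}"
  shows "cliffF p q of_c gen (blade gen A) = of_c (lam (p+q) (card A)) * blade gen A"
proof -
  have "gen a * blade gen A * (\<Sum>b\<in>{1..p+q}. of_c (eta p a b) * gen b)
      = of_c ((-1) ^ card (A - {a})) * blade gen A" if a: "a \<in> {1..p+q}" for a
  proof -
    define s where "s = (-1::complex) ^ card (A - {a})"
    define e where "e = eta p a a"
    have "gen a * blade gen A * (\<Sum>b\<in>{1..p+q}. of_c (eta p a b) * gen b)
        = of_c e * (gen a * blade gen A * gen a)"
      unfolding sum_eta_gen[OF a] e_def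
      by (simp only: mult.assoc[symmetric] of_c_commute[of "eta p a a" "gen a * blade gen A", symmetric])
    also have "\<dots> = of_c e * (of_c s * (blade gen A * of_c e))"
      by (simp add: gen_mult_blade[OF A a] gen_square[OF a] s_def e_def mult.assoc)
    also have "\<dots> = of_c (e * s * e) * blade gen A"
      by (simp only: of_c_commute[of e "blade gen A"] of_c_mult mult.assoc)
    also have "e * s * e = s"
      by (simp add: e_def eta_def)
    finally show ?thesis by (simp add: s_def)
  qed
  then have "cliffF p q of_c gen (blade gen A)
      = (\<Sum>a\<in>{1..p+q}. of_c ((-1) ^ card (A - {a})) * blade gen A)"
    unfolding cliffF_def by (rule sum.cong[OF refl])
  also have "\<dots> = of_c (lam (p+q) (card A)) * blade gen A"
    by (simp only: sum_distrib_right[symmetric] of_c_sum[symmetric] sum_minus_one_power_card_Diff[OF A])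
  finally show ?thesis .
qed

lemma cliffF_sum:
  "cliffF p q of_c gen (\<Sum>i\<in>I. of_c (d i) * Y i) = (\<Sum>i\<in>I. of_c (d i) * cliffF p q of_c gen (Y i))"
proof -
  define E where "E a = (\<Sum>b\<in>{1..p+q}. of_c (eta p a b) * gen b)" for a
  have F: "cliffF p q of_c gen Z = (\<Sum>a\<in>{1..p+q}. gen a * Z * E a)" for Z
    by (simp add: cliffF_def E_def)
  have "gen a * (of_c (d i) * Y i) * E a = of_c (d i) * (gen a * Y i * E a)" for a i
    by (simp only: mult.assoc[symmetric] of_c_commute[of "d i" "gen a"])
  then show ?thesis
    unfolding F sum_distrib_left sum_distrib_right by (subst sum.swap) simp
qed

lemma sum_grade_proj: "(\<Sum>k\<le>p+q. grade_proj (p+q) of_c gen k U) = U"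
proof -
  have "{A. A \<subseteq> {1..p+q} \<and> card A = k} = {A \<in> Pow {1..p+q}. card A = k}" for k
    by auto
  then have "(\<Sum>k\<le>p+q. grade_proj (p+q) of_c gen k U)
      = (\<Sum>A\<in>Pow {1..p+q}. of_c (cl_coeff (p+q) of_c gen U A) * blade gen A)"
    unfolding grade_proj_def
    by (simp only:) (rule sum.group; auto intro: card_mono[of "{1..p+q}", simplified])
  then show ?thesis using blade_expansion by simp
qed

lemma cliffF_grade_proj:
  "cliffF p q of_c gen (grade_proj (p+q) of_c gen k U)
     = of_c (lam (p+q) k) * grade_proj (p+q) of_c gen k U"
  unfolding grade_proj_def cliffF_sum sum_distrib_left
  by (intro sum.cong refl) (simp add: cliffF_blade of_c_commute[of "lam (p+q) k"] mult.assoc flip: of_c_mult)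

lemma cliffF_power_eq_sum_grade_proj:
  "(cliffF p q of_c gen ^^ l) U = (\<Sum>k\<le>p+q. of_c (lam (p+q) k ^ l) * grade_proj (p+q) of_c gen k U)"
proof (induction l)
  case 0
  then show ?case by (simp add: of_c_1 sum_grade_proj)
next
  case (Suc l)
  then show ?case
    by (simp add: cliffF_sum cliffF_grade_proj mult.assoc[symmetric] mult_ac flip: of_c_mult)
qed

lemma cliffF_power_eq_sum_grade_proj_pairs:
  assumes "odd (p+q)"
  shows "(cliffF p q of_c gen ^^ l) U =
    (\<Sum>j<(p+q+1) div 2. of_c (lam (p+q) j ^ l) *
       (grade_proj (p+q) of_c gen j U + grade_proj (p+q) of_c gen (p+q - j) U))"
proof -
  obtain m where m: "p + q = 2 * m + 1" using assms oddE by blast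
  have "(cliffF p q of_c gen ^^ l) U =
      (\<Sum>j\<le>m. of_c (lam (p+q) j ^ l) * grade_proj (p+q) of_c gen j U
              + of_c (lam (p+q) (p+q-j) ^ l) * grade_proj (p+q) of_c gen (p+q-j) U)"
    unfolding cliffF_power_eq_sum_grade_proj m by (rule sum_atMost_odd_fold)
  also have "\<dots> = (\<Sum>j\<le>m. of_c (lam (p+q) j ^ l) *
       (grade_proj (p+q) of_c gen j U + grade_proj (p+q) of_c gen (p+q - j) U))"
    using lam_diff_odd[OF assms] m by (intro sum.cong refl) (simp add: distrib_left)
  finally show ?thesis using m by (simp add: lessThan_Suc_atMost)
qed

lemma grade_proj_eq_sum_cliffF_power:
  assumes "mat_inverse_on (p+q+1) (\<lambda>k l. lam (p+q) l ^ k) B" "k \<le> p+q"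
  shows "grade_proj (p+q) of_c gen k U = (\<Sum>l\<le>p+q. of_c (B k l) * (cliffF p q of_c gen ^^ l) U)"
proof -
  have "(\<Sum>l\<le>p+q. of_c (B k l) * (cliffF p q of_c gen ^^ l) U) =
    (\<Sum>l<p+q+1. of_c (B k l) * (\<Sum>j<p+q+1. of_c (lam (p+q) j ^ l) * grade_proj (p+q) of_c gen j U))"
    by (simp add: cliffF_power_eq_sum_grade_proj lessThan_Suc_atMost)
  also have "\<dots> = grade_proj (p+q) of_c gen k U"
    using assms by (intro inverse_vandermonde_solves) auto
  finally show ?thesis by simp
qed

lemma grade_proj_pair_eq_sum_cliffF_power:
  assumes "odd (p+q)" "mat_inverse_on ((p+q+1) div 2) (\<lambda>k l. lam (p+q) l ^ k) G"
    and "k \<le> (p+q-1) div 2"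
  shows "grade_proj (p+q) of_c gen k U + grade_proj (p+q) of_c gen (p+q - k) U =
    (\<Sum>l\<le>(p+q-1) div 2. of_c (G k l) * (cliffF p q of_c gen ^^ l) U)"
proof -
  have m: "{..(p+q-1) div 2} = {..<(p+q+1) div 2}"
    using assms(1) by (auto elim!: oddE)
  show ?thesis
    unfolding m cliffF_power_eq_sum_grade_proj_pairs[OF assms(1)]
    using assms by (intro inverse_vandermonde_solves[symmetric]) (auto elim!: oddE)
qed

end

theorem theorem4:
  fixes p q :: nat and of_c :: "complex \<Rightarrow> 'a::ring_1" and gen :: "nat \<Rightarrow> 'a"
  assumes "p + q \<ge> 1"
    and "is_clifford p q of_c gen"
  shows "(even (p + q) \<longrightarrow>
            (\<exists>B. mat_inverse_on (p + q + 1) (\<lambda>k l. lam (p + q) l ^ k) B) \<and>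
            (\<forall>B. mat_inverse_on (p + q + 1) (\<lambda>k l. lam (p + q) l ^ k) B \<longrightarrow>
               (\<forall>U. \<forall>k\<le>p + q. grade_proj (p + q) of_c gen k U =
                  (\<Sum>l\<le>p + q. of_c (B k l) * (cliffF p q of_c gen ^^ l) U))))
       \<and> (odd (p + q) \<longrightarrow>
            (\<exists>G. mat_inverse_on ((p + q + 1) div 2) (\<lambda>k l. lam (p + q) l ^ k) G) \<and>
            (\<forall>G. mat_inverse_on ((p + q + 1) div 2) (\<lambda>k l. lam (p + q) l ^ k) G \<longrightarrow>
               (\<forall>U. \<forall>k\<le>(p + q - 1) div 2.
                  grade_proj (p + q) of_c gen k U + grade_proj (p + q) of_c gen (p + q - k) U =
                  (\<Sum>l\<le>(p + q - 1) div 2. of_c (G k l) * (cliffF p q of_c gen ^^ l) U))))"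
proof (intro conjI impI allI)
  interpret clifford_algebra p q of_c gen by (rule clifford_algebra.intro) (fact assms(2))
  show "\<exists>B. mat_inverse_on (p + q + 1) (\<lambda>k l. lam (p + q) l ^ k) B" if "even (p + q)"
  proof -
    have "inj_on (lam (p + q)) {..<p + q + 1}"
      using inj_on_lam_even[OF that] by (simp add: lessThan_Suc_atMost)
    then show ?thesis by (intro exI) (rule vandermonde_mat_inverse)
  qed
  show "\<exists>G. mat_inverse_on ((p + q + 1) div 2) (\<lambda>k l. lam (p + q) l ^ k) G"
    by (intro exI) (rule vandermonde_mat_inverse[OF inj_on_lam_odd])
  show "grade_proj (p + q) of_c gen k U = (\<Sum>l\<le>p + q. of_c (B k l) * (cliffF p q of_c gen ^^ l) U)"
    if "mat_inverse_on (p + q + 1) (\<lambda>k l. lam (p + q) l ^ k) B" "k \<le> p + q" for B U k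
    using that by (rule grade_proj_eq_sum_cliffF_power)
  show "grade_proj (p + q) of_c gen k U + grade_proj (p + q) of_c gen (p + q - k) U =
      (\<Sum>l\<le>(p + q - 1) div 2. of_c (G k l) * (cliffF p q of_c gen ^^ l) U)"
    if "odd (p + q)" "mat_inverse_on ((p + q + 1) div 2) (\<lambda>k l. lam (p + q) l ^ k) G"
      "k \<le> (p + q - 1) div 2" for G U k
    using that by (rule grade_proj_pair_eq_sum_cliffF_power)
qed

end
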